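(* Fix $p\in(1,\infty)$ and Radon measures $\mu,\nu$ on $\mathbb{R}^N$. Let $M\in W(\mathbb{R}^N)$. Then the function $\widetilde M$ on $\mathbb{R}^N\times\mathbb{R}^N$, $\widetilde M(s,t)=M(t-s)$, is a Schur multiplier on the set of restrictedly $L^p$ bounded singular kernels, with restricted Schur norm at most $\|M\|_W$.
   Context: A singular kernel on $\mathbb{R}^N$ (w.r.t. Radon measures $\mu,\nu$) is a $\mu\times\nu$-measurable function $K$ on $\mathbb{R}^N\times\mathbb{R}^N$ which is locally in $L^2(\mu\times\nu)$ off the diagonal $\{s=t\}$. It is restrictedly $L^p$ bounded with bound $C$ if $\left|\int K(s,t)f(t)g(s)\,d\mu(t)\,d\nu(s)\right|\le C\|f\|_{L^p(\mu)}\|g\|_{L^{p'}(\nu)}$ ($1/p+1/p'=1$) for all bounded Borel $f,g$ with compact supports at positive distance from each other. A function $M$ on $\mathbb{R}^N\times\mathbb{R}^N$ is a Schur multiplier on the set of restrictedly $L^p$ bounded singular kernels if there is $C_1$ such that for every restrictedly $L^p$ bounded singular kernel $K$ with bound $C$, the kernel $MK$ is restrictedly $L^p$ bounded with bound $C_1C$; the least such $C_1$ is the restricted Schur norm of $M$. The Wiener algebra $W(\mathbb{R}^N)$ is the set of functions $f=\widehat h$ with $h\in L^1(\mathbb{R}^N)$, normed by $\|f\|_W=\|h\|_{L^1}$, where $\widehat h(s)=\int h(x)e^{-is\cdot x}dx$. *)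

theory Defs
  imports "HOL-Analysis.Analysis"
begin

text \<open>Radon measure on a Euclidean space: a Borel measure finite on compact sets
  (on R^N local finiteness implies regularity).\<close>
definition radon_measure :: "'a::euclidean_space measure \<Rightarrow> bool" where
  "radon_measure m \<longleftrightarrow> sets m = sets borel \<and> (\<forall>S. compact S \<longrightarrow> emeasure m S < \<infinity>)"

definition Lp_norm :: "'a measure \<Rightarrow> real \<Rightarrow> ('a \<Rightarrow> complex) \<Rightarrow> real" where
  "Lp_norm m p f = (integral\<^sup>L m (\<lambda>x. norm (f x) powr p)) powr (1 / p)"

definition conj_exp :: "real \<Rightarrow> real" where
  "conj_exp p = p / (p - 1)"

definition test_fun_on :: "('a::euclidean_space \<Rightarrow> complex) \<Rightarrow> 'a set \<Rightarrow> bool" where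
  "test_fun_on f S \<longleftrightarrow> f \<in> borel_measurable borel \<and> bounded (range f) \<and> compact S
      \<and> (\<forall>x. x \<notin> S \<longrightarrow> f x = 0)"

text \<open>Singular kernel: a (completion-)measurable function on pairs (s,t), with s
  integrated against nu and t against mu, locally L^2 off the diagonal.\<close>
definition singular_kernel ::
  "'a::euclidean_space measure \<Rightarrow> 'a measure \<Rightarrow> ('a \<times> 'a \<Rightarrow> complex) \<Rightarrow> bool" where
  "singular_kernel mu nu K \<longleftrightarrow>
     K \<in> borel_measurable (completion (nu \<Otimes>\<^sub>M mu)) \<and>
     (\<forall>C. compact C \<and> C \<inter> {z. fst z = snd z} = {} \<longrightarrow>
        integrable (completion (nu \<Otimes>\<^sub>M mu)) (\<lambda>z. indicator C z * (norm (K z))\<^sup>2))"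

definition restr_Lp_bounded ::
  "'a::euclidean_space measure \<Rightarrow> 'a measure \<Rightarrow> real \<Rightarrow> ('a \<times> 'a \<Rightarrow> complex) \<Rightarrow> real \<Rightarrow> bool" where
  "restr_Lp_bounded mu nu p K C \<longleftrightarrow> singular_kernel mu nu K \<and>
     (\<forall>f g Sf Sg. test_fun_on f Sf \<and> test_fun_on g Sg \<and>
        (\<exists>\<delta>>0. \<forall>x\<in>Sf. \<forall>y\<in>Sg. \<delta> \<le> dist x y) \<longrightarrow>
        norm (integral\<^sup>L (completion (nu \<Otimes>\<^sub>M mu)) (\<lambda>(s,t). K (s,t) * f t * g s))
          \<le> C * Lp_norm mu p f * Lp_norm nu (conj_exp p) g)"

definition schur_const ::
  "'a::euclidean_space measure \<Rightarrow> 'a measure \<Rightarrow> real \<Rightarrow> ('a \<times> 'a \<Rightarrow> complex) \<Rightarrow> real \<Rightarrow> bool" where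
  "schur_const mu nu p M C1 \<longleftrightarrow> 0 \<le> C1 \<and>
     (\<forall>K C. restr_Lp_bounded mu nu p K C \<longrightarrow> restr_Lp_bounded mu nu p (\<lambda>z. M z * K z) (C1 * C))"

definition restr_schur_multiplier ::
  "'a::euclidean_space measure \<Rightarrow> 'a measure \<Rightarrow> real \<Rightarrow> ('a \<times> 'a \<Rightarrow> complex) \<Rightarrow> bool" where
  "restr_schur_multiplier mu nu p M \<longleftrightarrow> (\<exists>C1. schur_const mu nu p M C1)"

definition restr_schur_norm ::
  "'a::euclidean_space measure \<Rightarrow> 'a measure \<Rightarrow> real \<Rightarrow> ('a \<times> 'a \<Rightarrow> complex) \<Rightarrow> real" where
  "restr_schur_norm mu nu p M = Inf {C1. schur_const mu nu p M C1}"

definition fourier :: "('a::euclidean_space \<Rightarrow> complex) \<Rightarrow> 'a \<Rightarrow> complex" where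
  "fourier h s = integral\<^sup>L lborel (\<lambda>x. h x * cis (- (s \<bullet> x)))"

definition wiener_algebra :: "('a::euclidean_space \<Rightarrow> complex) set" where
  "wiener_algebra = {f. \<exists>h. integrable lborel h \<and> f = fourier h}"

definition wiener_norm :: "('a::euclidean_space \<Rightarrow> complex) \<Rightarrow> real" where
  "wiener_norm f = Inf {integral\<^sup>L lborel (\<lambda>x. norm (h x)) | h. integrable lborel h \<and> f = fourier h}"

end

theory Submission
  imports Defs
begin

text \<open>Write M as the Fourier transform of h in L1, so M(t - s) is the integral over x of
  h(x) e^{i(s - t).x}. By Fubini, the pairing of M(t - s) K(s,t) with separated test functions
  f, g is the h(x) dx-average of the pairings of K with the modulated test functions
  f(t) e^{-it.x} and g(s) e^{is.x}. Modulation preserves supports, boundedness and L^p norms,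
  so each of these pairings is at most C |f|_p |g|_p', and their average at most
  |h|_1 C |f|_p |g|_p'. Since |M| is bounded by |h|_1, the product is again a singular kernel.\<close>

lemma radon_measure_space: "radon_measure m \<Longrightarrow> space m = UNIV"
  unfolding radon_measure_def by (metis sets_eq_imp_space_eq space_borel)

lemma sigma_finite_measure_radon:
  assumes "radon_measure (m::'a::euclidean_space measure)"
  shows "sigma_finite_measure m"
proof
  have "sets m = sets borel" "\<And>S. compact S \<Longrightarrow> emeasure m S < \<infinity>"
    using assms unfolding radon_measure_def by auto
  then show "\<exists>A. countable A \<and> A \<subseteq> sets m \<and> \<Union> A = space m \<and> (\<forall>a\<in>A. emeasure m a \<noteq> \<infinity>)"
    using radon_measure_space[OF assms]
    by (intro exI[of _ "range (\<lambda>n::nat. cball (0::'a) (real n))"])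
       (auto simp: real_arch_simple less_top[symmetric])
qed

lemma sets_pair_radon:
  assumes "radon_measure (nu::'a::euclidean_space measure)" "radon_measure (mu::'a measure)"
  shows "sets (nu \<Otimes>\<^sub>M mu) = sets (borel :: ('a \<times> 'a) measure)"
  using assms unfolding radon_measure_def by (metis borel_prod sets_pair_measure_cong)

lemma sigma_finite_measure_completion:
  assumes "sigma_finite_measure M"
  shows "sigma_finite_measure (completion M)"
proof -
  interpret sigma_finite_measure M by fact
  obtain A where "countable A" "A \<subseteq> sets M" "\<Union>A = space M" "\<forall>a\<in>A. emeasure M a \<noteq> \<infinity>"
    using sigma_finite_countable by blast
  then show ?thesis
    by (intro sigma_finite_measure.intro exI[of _ A]) (auto simp: emeasure_completion)
qed

lemma sigma_finite_measure_completion_pair_radon: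
  fixes mu nu :: "'a::euclidean_space measure"
  shows   "radon_measure mu \<Longrightarrow> radon_measure nu \<Longrightarrow> sigma_finite_measure (completion (nu \<Otimes>\<^sub>M mu))"
  by (intro sigma_finite_measure_completion sigma_finite_pair_measure sigma_finite_measure_radon)

lemma measurable_completion_pair_radon_borel:
  fixes mu nu :: "'a::euclidean_space measure"
  assumes "radon_measure mu" "radon_measure nu"
  shows "(\<lambda>z. z) \<in> completion (nu \<Otimes>\<^sub>M mu) \<rightarrow>\<^sub>M borel"
  by (intro measurable_completion measurable_ident_sets) (rule sets_pair_radon[OF assms(2,1)])

lemma borel_measurable_completion_pair_radon:
  fixes mu nu :: "'a::euclidean_space measure" and \<phi> :: "'a \<times> 'a \<Rightarrow> 'b::topological_space"
  assumes "radon_measure mu" "radon_measure nu" "\<phi> \<in> borel_measurable borel"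
  shows "\<phi> \<in> borel_measurable (completion (nu \<Otimes>\<^sub>M mu))"
  using measurable_compose[OF measurable_completion_pair_radon_borel[OF assms(1,2)] assms(3)]
  by (simp add: comp_def)

lemma sets_completion_pair_radon:
  fixes mu nu :: "'a::euclidean_space measure"
  assumes "radon_measure mu" "radon_measure nu" "S \<in> sets borel"
  shows "S \<in> sets (completion (nu \<Otimes>\<^sub>M mu))"
  using sets_completionI_sets[of S "nu \<Otimes>\<^sub>M mu"] sets_pair_radon[OF assms(2,1)] assms(3)
  by simp

lemma emeasure_completion_pair_radon_Times_compact:
  fixes mu nu :: "'a::euclidean_space measure"
  assumes "radon_measure mu" "radon_measure nu" "compact A" "compact B"
  shows "emeasure (completion (nu \<Otimes>\<^sub>M mu)) (A \<times> B) < \<infinity>"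
proof -
  have sets: "A \<in> sets nu" "B \<in> sets mu"
    using assms unfolding radon_measure_def by (auto intro: borel_closed compact_imp_closed)
  then have "emeasure (completion (nu \<Otimes>\<^sub>M mu)) (A \<times> B) = emeasure nu A * emeasure mu B"
    by (simp add: sigma_finite_measure.emeasure_pair_measure_Times[OF sigma_finite_measure_radon[OF assms(1)]])
  also have "\<dots> < \<infinity>"
    using assms unfolding radon_measure_def by (simp add: ennreal_mult_less_top)
  finally show ?thesis .
qed

lemma norm_fourier_le:
  assumes "integrable lborel h"
  shows "norm (fourier h y) \<le> (\<integral>x. norm (h x) \<partial>lborel)"
  unfolding fourier_def
  using integral_norm_bound[of lborel "\<lambda>x. h x * cis (- (y \<bullet> x))"] by (simp add: norm_mult)

lemma borel_measurable_fourier_diff: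
  fixes h :: "'a::euclidean_space \<Rightarrow> complex"
  assumes h: "h \<in> borel_measurable borel"
  shows "(\<lambda>z::'a \<times> 'a. fourier h (snd z - fst z)) \<in> borel_measurable borel"
proof -
  have "(\<lambda>w::('a \<times> 'a) \<times> 'a. h (snd w) * cis (- ((snd (fst w) - fst (fst w)) \<bullet> snd w)))
      \<in> borel_measurable borel"
  proof (rule borel_measurable_times)
    show "(\<lambda>w::('a \<times> 'a) \<times> 'a. h (snd w)) \<in> borel_measurable borel"
      using measurable_compose[OF measurable_snd h] by (simp add: comp_def borel_prod[symmetric])
  qed (intro borel_measurable_continuous_onI continuous_intros)
  then have "case_prod (\<lambda>z x. h x * cis (- ((snd z - fst z) \<bullet> x)))
      \<in> borel_measurable (borel \<Otimes>\<^sub>M lborel)"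
    by (simp add: measurable_cong_sets[OF sets_pair_measure_cong[OF refl sets_lborel] refl]
        borel_prod split_beta')
  from sigma_finite_measure.borel_measurable_lebesgue_integral[OF sigma_finite_lborel this]
  show ?thesis unfolding fourier_def by simp
qed

lemma test_fun_on_bounded:
  assumes "test_fun_on f S"
  obtains B where "B \<ge> 0" "\<And>x. norm (f x) \<le> B"
proof -
  from assms obtain a where "\<forall>x. norm (f x) \<le> a"
    unfolding test_fun_on_def bounded_iff by auto
  moreover then have "a \<ge> 0" using norm_ge_zero order_trans by blast
  ultimately show ?thesis using that by blast
qed

lemma test_fun_on_mult_unimodular:
  fixes f :: "'a::euclidean_space \<Rightarrow> complex"
  assumes "test_fun_on f S" "continuous_on UNIV c" "\<And>t. norm (c t) = 1"
  shows "test_fun_on (\<lambda>t. f t * c t) S"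
proof -
  obtain B where "\<And>x. norm (f x) \<le> B" using test_fun_on_bounded[OF assms(1)] by blast
  then have "bounded (range (\<lambda>t. f t * c t))"
    unfolding bounded_iff by (auto simp: norm_mult assms(3))
  moreover have "c \<in> borel_measurable borel"
    using assms(2) by (rule borel_measurable_continuous_onI)
  ultimately show ?thesis using assms(1) unfolding test_fun_on_def by auto
qed

lemma Lp_norm_mult_unimodular:
  assumes "\<And>t. norm (c t) = 1"
  shows "Lp_norm m p (\<lambda>t. f t * c t) = Lp_norm m p f"
  unfolding Lp_norm_def by (simp add: norm_mult assms)

lemma singular_kernel_bounded_mult:
  fixes mu nu :: "'a::euclidean_space measure"
  assumes mu: "radon_measure mu" and nu: "radon_measure nu"
    and m: "m \<in> borel_measurable borel" "\<And>z. norm (m z) \<le> H"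
    and K: "singular_kernel mu nu K"
  shows "singular_kernel mu nu (\<lambda>z. m z * K z)"
  unfolding singular_kernel_def
proof (intro conjI allI impI)
  let ?Q = "completion (nu \<Otimes>\<^sub>M mu)"
  have mQ[measurable]: "m \<in> borel_measurable ?Q"
    by (rule borel_measurable_completion_pair_radon[OF mu nu m(1)])
  have KQ[measurable]: "K \<in> borel_measurable ?Q"
    using K unfolding singular_kernel_def by blast
  show "(\<lambda>z. m z * K z) \<in> borel_measurable ?Q" by measurable
  fix S :: "('a \<times> 'a) set" assume S: "compact S \<and> S \<inter> {z. fst z = snd z} = {}"
  have [measurable]: "S \<in> sets ?Q"
    using S by (intro sets_completion_pair_radon[OF mu nu] borel_closed compact_imp_closed) auto
  have major: "integrable ?Q (\<lambda>z. H\<^sup>2 * (indicator S z * (norm (K z))\<^sup>2))"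
    using K S unfolding singular_kernel_def by (intro integrable_mult_right) auto
  have bound: "norm (indicator S z * (norm (m z * K z))\<^sup>2)
      \<le> norm (H\<^sup>2 * (indicator S z * (norm (K z))\<^sup>2))" for z
  proof -
    have "(norm (m z))\<^sup>2 \<le> H\<^sup>2" using m(2)[of z] by (intro power_mono) auto
    then have "(norm (m z))\<^sup>2 * (norm (K z))\<^sup>2 \<le> H\<^sup>2 * (norm (K z))\<^sup>2"
      by (intro mult_right_mono) auto
    then show ?thesis by (simp add: norm_mult power_mult_distrib indicator_def)
  qed
  show "integrable ?Q (\<lambda>z. indicator S z * (norm (m z * K z))\<^sup>2)"
    by (rule Bochner_Integration.integrable_bound[OF major _ AE_I2[OF bound]]) measurable
qed

lemma integrable_singular_kernel_test_funs:
  fixes mu nu :: "'a::euclidean_space measure"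
  assumes mu: "radon_measure mu" and nu: "radon_measure nu"
    and K: "singular_kernel mu nu K"
    and f: "test_fun_on f Sf" and g: "test_fun_on g Sg"
    and sep: "\<exists>\<delta>>0. \<forall>x\<in>Sf. \<forall>y\<in>Sg. \<delta> \<le> dist x y"
  shows "integrable (completion (nu \<Otimes>\<^sub>M mu)) (\<lambda>z. K z * f (snd z) * g (fst z))"
proof -
  let ?Q = "completion (nu \<Otimes>\<^sub>M mu)"
  let ?S = "Sg \<times> Sf"
  obtain Bf where Bf: "Bf \<ge> 0" "\<And>x. norm (f x) \<le> Bf" using test_fun_on_bounded[OF f] by blast
  obtain Bg where Bg: "Bg \<ge> 0" "\<And>x. norm (g x) \<le> Bg" using test_fun_on_bounded[OF g] by blast
  have fb: "f \<in> borel_measurable borel" and cSf: "compact Sf" and f0: "\<And>x. x \<notin> Sf \<Longrightarrow> f x = 0"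
    using f unfolding test_fun_on_def by auto
  have gb: "g \<in> borel_measurable borel" and cSg: "compact Sg" and g0: "\<And>x. x \<notin> Sg \<Longrightarrow> g x = 0"
    using g unfolding test_fun_on_def by auto
  have cS: "compact ?S" by (rule compact_Times[OF cSg cSf])
  have S_diag: "?S \<inter> {z. fst z = snd z} = {}"
    using sep by force
  have [measurable]: "?S \<in> sets ?Q"
    by (intro sets_completion_pair_radon[OF mu nu] borel_closed compact_imp_closed cS)
  have [measurable]: "K \<in> borel_measurable ?Q"
    using K unfolding singular_kernel_def by blast
  have [measurable]: "(\<lambda>z. f (snd z)) \<in> borel_measurable ?Q" "(\<lambda>z. g (fst z)) \<in> borel_measurable ?Q"
    using measurable_compose[OF measurable_snd fb] measurable_compose[OF measurable_fst gb]
    by (auto intro!: borel_measurable_completion_pair_radon[OF mu nu] simp: comp_def borel_prod[symmetric])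
  have major: "integrable ?Q (\<lambda>z. Bf * Bg * (indicator ?S z + indicator ?S z * (norm (K z))\<^sup>2))"
    using K cS S_diag emeasure_completion_pair_radon_Times_compact[OF mu nu cSg cSf]
    unfolding singular_kernel_def
    by (intro integrable_mult_right integrable_add integrable_real_indicator) auto
  have bound: "norm (K z * f (snd z) * g (fst z))
      \<le> norm (Bf * Bg * (indicator ?S z + indicator ?S z * (norm (K z))\<^sup>2))" for z
  proof (cases "z \<in> ?S")
    case True
    have "norm (K z * f (snd z) * g (fst z)) \<le> norm (K z) * Bf * Bg"
      using Bf Bg by (simp add: norm_mult mult_mono)
    also have "\<dots> \<le> (1 + (norm (K z))\<^sup>2) * Bf * Bg"
    proof -
      have "norm (K z) \<le> 1 + (norm (K z))\<^sup>2"
        using sum_squares_bound[of "norm (K z)" 1] norm_ge_zero[of "K z"] unfolding power_one by linarith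
      then show ?thesis using Bf Bg by (intro mult_right_mono) auto
    qed
    finally show ?thesis using True Bf Bg by (simp add: algebra_simps)
  next
    case False
    then have "f (snd z) = 0 \<or> g (fst z) = 0" using f0 g0 by (cases z) auto
    then show ?thesis by auto
  qed
  show ?thesis
    by (rule Bochner_Integration.integrable_bound[OF major _ AE_I2[OF bound]]) measurable
qed

lemma integral_fourier_diff_mult:
  fixes h :: "'a::euclidean_space \<Rightarrow> complex" and G :: "'a \<times> 'a \<Rightarrow> complex"
  assumes Q: "sigma_finite_measure Q" "(\<lambda>z. z) \<in> Q \<rightarrow>\<^sub>M borel"
    and h: "integrable lborel h" and G: "integrable Q G"
  shows "integrable lborel (\<lambda>x. h x * (\<integral>z. cis ((fst z - snd z) \<bullet> x) * G z \<partial>Q))"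
    and "(\<integral>z. fourier h (snd z - fst z) * G z \<partial>Q)
       = (\<integral>x. h x * (\<integral>z. cis ((fst z - snd z) \<bullet> x) * G z \<partial>Q) \<partial>lborel)"
proof -
  define F where "F x z = h x * cis ((fst z - snd z) \<bullet> x) * G z" for x z
  interpret pair_sigma_finite lborel Q
    using Q(1) by (simp add: pair_sigma_finite_def sigma_finite_lborel)
  have "(\<lambda>w. (fst w, snd w)) \<in> lborel \<Otimes>\<^sub>M Q \<rightarrow>\<^sub>M borel \<Otimes>\<^sub>M (borel :: ('a \<times> 'a) measure)"
    using measurable_compose[OF measurable_fst measurable_ident_sets[OF sets_lborel]]
      measurable_compose[OF measurable_snd Q(2)]
    by (intro measurable_Pair) (simp_all add: comp_def)
  then have "(\<lambda>w. w) \<in> lborel \<Otimes>\<^sub>M Q \<rightarrow>\<^sub>M (borel :: ('a \<times> ('a \<times> 'a)) measure)"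
    by (simp add: borel_prod)
  moreover have "(\<lambda>w::'a \<times> ('a \<times> 'a). cis ((fst (snd w) - snd (snd w)) \<bullet> fst w))
      \<in> borel_measurable borel"
    by (intro borel_measurable_continuous_onI continuous_intros)
  ultimately have "(\<lambda>w::'a \<times> ('a \<times> 'a). cis ((fst (snd w) - snd (snd w)) \<bullet> fst w))
      \<in> borel_measurable (lborel \<Otimes>\<^sub>M Q)"
    by (rule measurable_compose)
  moreover have "h \<in> borel_measurable lborel" "G \<in> borel_measurable Q" using h G by auto
  ultimately have F_meas: "case_prod F \<in> borel_measurable (lborel \<Otimes>\<^sub>M Q)"
    unfolding F_def split_beta' by measurable
  moreover have "integrable lborel (\<lambda>x. \<integral>z. norm (F x z) \<partial>Q)"
    using h by (simp add: F_def norm_mult)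
  moreover have "integrable Q (F x)" for x
    using measurable_Pair2[OF F_meas, of x] unfolding F_def
    by (intro Bochner_Integration.integrable_bound[OF integrable_mult_right[OF G, of "h x"]]
        AE_I2) (auto simp: norm_mult)
  ultimately have F: "integrable (lborel \<Otimes>\<^sub>M Q) (case_prod F)"
    by (simp add: Fubini_integrable)
  have inner_lborel: "(\<integral>x. F x z \<partial>lborel) = fourier h (snd z - fst z) * G z" for z
  proof -
    have "F x z = h x * cis (- ((snd z - fst z) \<bullet> x)) * G z" for x
      by (simp add: F_def inner_diff_left)
    then show ?thesis unfolding fourier_def by simp
  qed
  have inner_Q: "(\<integral>z. F x z \<partial>Q) = h x * (\<integral>z. cis ((fst z - snd z) \<bullet> x) * G z \<partial>Q)" for x
    by (simp add: F_def mult.assoc)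
  show "integrable lborel (\<lambda>x. h x * (\<integral>z. cis ((fst z - snd z) \<bullet> x) * G z \<partial>Q))"
    using integrable_fst[OF F] by (simp add: inner_Q)
  show "(\<integral>z. fourier h (snd z - fst z) * G z \<partial>Q)
      = (\<integral>x. h x * (\<integral>z. cis ((fst z - snd z) \<bullet> x) * G z \<partial>Q) \<partial>lborel)"
    using Fubini_integral[OF F] by (simp add: inner_lborel inner_Q)
qed

lemma norm_integral_fourier_diff_mult_le:
  fixes h :: "'a::euclidean_space \<Rightarrow> complex" and G :: "'a \<times> 'a \<Rightarrow> complex"
  assumes Q: "sigma_finite_measure Q" "(\<lambda>z. z) \<in> Q \<rightarrow>\<^sub>M borel"
    and h: "integrable lborel h" and G: "integrable Q G"
    and modulated_le: "\<And>x. norm (\<integral>z. cis ((fst z - snd z) \<bullet> x) * G z \<partial>Q) \<le> B"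
  shows "norm (\<integral>z. fourier h (snd z - fst z) * G z \<partial>Q) \<le> (\<integral>x. norm (h x) \<partial>lborel) * B"
proof -
  let ?I = "\<lambda>x. \<integral>z. cis ((fst z - snd z) \<bullet> x) * G z \<partial>Q"
  have "norm (\<integral>z. fourier h (snd z - fst z) * G z \<partial>Q) = norm (\<integral>x. h x * ?I x \<partial>lborel)"
    by (simp add: integral_fourier_diff_mult(2)[OF Q h G])
  also have "\<dots> \<le> (\<integral>x. norm (h x) * B \<partial>lborel)"
    using integral_fourier_diff_mult(1)[OF Q h G] h modulated_le
    by (intro Bochner_Integration.integral_norm_bound_integral) (auto simp: norm_mult mult_left_mono)
  also have "\<dots> = (\<integral>x. norm (h x) \<partial>lborel) * B"
    by simp
  finally show ?thesis .
qed

lemma restr_Lp_bounded_fourier_diff_mult: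
  fixes mu nu :: "'a::euclidean_space measure" and h :: "'a \<Rightarrow> complex"
  assumes mu: "radon_measure mu" and nu: "radon_measure nu" and h: "integrable lborel h"
    and K: "restr_Lp_bounded mu nu p K C"
  shows "restr_Lp_bounded mu nu p (\<lambda>z. fourier h (snd z - fst z) * K z)
           ((\<integral>x. norm (h x) \<partial>lborel) * C)"
  unfolding restr_Lp_bounded_def
proof (intro conjI allI impI)
  have "h \<in> borel_measurable borel"
    using h by (simp add: measurable_lborel1)
  then show "singular_kernel mu nu (\<lambda>z. fourier h (snd z - fst z) * K z)"
    using K unfolding restr_Lp_bounded_def
    by (intro singular_kernel_bounded_mult[OF mu nu borel_measurable_fourier_diff norm_fourier_le[OF h]])
       auto
next
  fix f g :: "'a \<Rightarrow> complex" and Sf Sg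
  assume fg: "test_fun_on f Sf \<and> test_fun_on g Sg \<and> (\<exists>\<delta>>0. \<forall>x\<in>Sf. \<forall>y\<in>Sg. \<delta> \<le> dist x y)"
  let ?Q = "completion (nu \<Otimes>\<^sub>M mu)"
  define G where "G z = K z * f (snd z) * g (fst z)" for z
  have "integrable ?Q G"
    using K fg unfolding G_def restr_Lp_bounded_def
    by (intro integrable_singular_kernel_test_funs[OF mu nu]) auto
  moreover have "norm (\<integral>z. cis ((fst z - snd z) \<bullet> x) * G z \<partial>?Q)
      \<le> C * Lp_norm mu p f * Lp_norm nu (conj_exp p) g" for x
  proof -
    let ?f = "\<lambda>t. f t * cis (- (t \<bullet> x))" and ?g = "\<lambda>s. g s * cis (s \<bullet> x)"
    have "test_fun_on ?f Sf" "test_fun_on ?g Sg"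
      using fg by (auto intro!: test_fun_on_mult_unimodular continuous_intros)
    then have "norm (\<integral>z. (case z of (s, t) \<Rightarrow> K (s, t) * ?f t * ?g s) \<partial>?Q)
        \<le> C * Lp_norm mu p ?f * Lp_norm nu (conj_exp p) ?g"
      using K fg unfolding restr_Lp_bounded_def by blast
    moreover have "(\<lambda>(s, t). K (s, t) * ?f t * ?g s) = (\<lambda>z. cis ((fst z - snd z) \<bullet> x) * G z)"
      by (auto simp: fun_eq_iff G_def cis_mult inner_diff_left mult_ac)
    ultimately show ?thesis
      by (simp add: Lp_norm_mult_unimodular)
  qed
  ultimately have "norm (\<integral>z. fourier h (snd z - fst z) * G z \<partial>?Q)
      \<le> (\<integral>x. norm (h x) \<partial>lborel) * (C * Lp_norm mu p f * Lp_norm nu (conj_exp p) g)"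
    by (intro norm_integral_fourier_diff_mult_le sigma_finite_measure_completion_pair_radon
        measurable_completion_pair_radon_borel mu nu h)
  then show "norm (\<integral>z. (case z of (s, t) \<Rightarrow> fourier h (snd (s, t) - fst (s, t)) * K (s, t) * f t * g s) \<partial>?Q)
      \<le> (\<integral>x. norm (h x) \<partial>lborel) * C * Lp_norm mu p f * Lp_norm nu (conj_exp p) g"
    by (simp add: G_def split_beta' mult_ac)
qed

lemma schur_const_fourier_diff:
  fixes mu nu :: "'a::euclidean_space measure" and h :: "'a \<Rightarrow> complex"
  assumes "radon_measure mu" "radon_measure nu" "integrable lborel h"
  shows "schur_const mu nu p (\<lambda>(s, t). fourier h (t - s)) (\<integral>x. norm (h x) \<partial>lborel)"
  using restr_Lp_bounded_fourier_diff_mult[OF assms]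
  unfolding schur_const_def by (simp add: case_prod_beta)

theorem lemma2p4:
  fixes mu nu :: "'a::euclidean_space measure" and p :: real and M :: "'a \<Rightarrow> complex"
  assumes "1 < p"
    and "radon_measure mu" and "radon_measure nu"
    and "M \<in> wiener_algebra"
  shows "restr_schur_multiplier mu nu p (\<lambda>(s,t). M (t - s))
       \<and> restr_schur_norm mu nu p (\<lambda>(s,t). M (t - s)) \<le> wiener_norm M"
proof -
  let ?M = "\<lambda>(s, t). M (t - s)"
  have schur: "schur_const mu nu p ?M (\<integral>x. norm (h x) \<partial>lborel)"
    if "integrable lborel h" "M = fourier h" for h
    using schur_const_fourier_diff[OF assms(2,3) that(1)] that(2) by simp
  obtain h where "integrable lborel h" "M = fourier h"
    using assms(4) unfolding wiener_algebra_def by blast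
  then have "restr_schur_multiplier mu nu p ?M"
    unfolding restr_schur_multiplier_def using schur by blast
  moreover have "restr_schur_norm mu nu p ?M \<le> wiener_norm M"
    unfolding restr_schur_norm_def wiener_norm_def
  proof (rule cInf_mono)
    show "bdd_below {C1. schur_const mu nu p ?M C1}"
      unfolding schur_const_def by (rule bdd_belowI[of _ 0]) auto
  qed (use \<open>integrable lborel h\<close> \<open>M = fourier h\<close> schur in blast)+
  ultimately show ?thesis ..
qed

end
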